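(* For every integer $n\ge 2$, $C^0_{L_n}=1+2\cos\big(\frac{\pi}{n+1}\big)$.
   Context: $L_n$ is the path graph with vertices $\{1,\dots,n\}$ and edges $\{j,j+1\}$, $1\le j\le n-1$, with the graph distance. A measure $\mu$ on $L_n$ is a weight function $\mu:\{1,\dots,n\}\to(0,\infty)$, $\mu(A)=\sum_{v\in A}\mu(v)$. Closed balls: $B(x,r)=\{y:|x-y|\le r\}$. $C^0_\mu=\max_{1\le x\le n}\mu(B(x,1))/\mu(x)$ and $C^0_{L_n}=\inf_\mu C^0_\mu$ over all such measures. *)

theory Defs
  imports "HOL-Analysis.Analysis"
begin

text \<open>The path graph L_n has vertex set {1..n}; graph distance is |x - y|.\<close>

definition path_dist :: "nat \<Rightarrow> nat \<Rightarrow> nat" where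
  "path_dist x y = (if x \<le> y then y - x else x - y)"

definition path_ball :: "nat \<Rightarrow> nat \<Rightarrow> nat \<Rightarrow> nat set" where
  "path_ball n x r = {y \<in> {1..n}. path_dist x y \<le> r}"

definition is_path_measure :: "nat \<Rightarrow> (nat \<Rightarrow> real) \<Rightarrow> bool" where
  "is_path_measure n \<mu> \<longleftrightarrow> (\<forall>v\<in>{1..n}. 0 < \<mu> v)"

definition meas :: "(nat \<Rightarrow> real) \<Rightarrow> nat set \<Rightarrow> real" where
  "meas \<mu> A = (\<Sum>v\<in>A. \<mu> v)"

definition C0_mu :: "nat \<Rightarrow> (nat \<Rightarrow> real) \<Rightarrow> real" where
  "C0_mu n \<mu> = Max ((\<lambda>x. meas \<mu> (path_ball n x 1) / \<mu> x) ` {1..n})"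

definition C0_L :: "nat \<Rightarrow> real" where
  "C0_L n = Inf (C0_mu n ` {\<mu>. is_path_measure n \<mu>})"

end

theory Submission
  imports Defs
begin

text \<open>The vector \<open>v k = sin (k \<pi> / (n + 1))\<close> is positive on \<open>{1..n}\<close>, vanishes at \<open>0\<close> and
  \<open>n + 1\<close>, and satisfies \<open>v (k - 1) + v k + v (k + 1) = \<lambda> v k\<close> with \<open>\<lambda> = 1 + 2 cos (\<pi> / (n + 1))\<close>;
  so the measure \<open>v\<close> has \<open>C\<^sup>0\<^sub>v = \<lambda>\<close>. Conversely, for any measure \<open>\<mu>\<close> with constant \<open>C\<close>, summing
  \<open>\<mu>(B(x,1)) \<le> C \<mu>(x)\<close> against \<open>v\<close> and using the symmetry of the relation \<open>|x - y| \<le> 1\<close> gives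
  \<open>\<lambda> \<Sum> \<mu> v \<le> C \<Sum> \<mu> v\<close>, hence \<open>\<lambda> \<le> C\<close>.\<close>

lemma path_dist_commute: "path_dist x y = path_dist y x"
  unfolding path_dist_def by auto

lemma sum_mult_meas_path_ball_commute:
  "(\<Sum>x\<in>{1..n}. f x * meas g (path_ball n x r)) = (\<Sum>y\<in>{1..n}. g y * meas f (path_ball n y r))"
proof -
  have "(\<Sum>x\<in>{1..n}. f x * meas g (path_ball n x r))
      = (\<Sum>x\<in>{1..n}. \<Sum>y\<in>{y. y \<in> {1..n} \<and> path_dist x y \<le> r}. f x * g y)"
    unfolding meas_def path_ball_def by (simp add: sum_distrib_left)
  also have "\<dots> = (\<Sum>y\<in>{1..n}. \<Sum>x\<in>{x. x \<in> {1..n} \<and> path_dist x y \<le> r}. f x * g y)"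
    by (rule sum.swap_restrict) auto
  also have "\<dots> = (\<Sum>y\<in>{1..n}. g y * meas f (path_ball n y r))"
    unfolding meas_def path_ball_def by (simp add: sum_distrib_left path_dist_commute mult.commute)
  finally show ?thesis .
qed

lemma meas_path_ball_1:
  assumes "f 0 = 0" "f (n + 1) = 0" "x \<in> {1..n}"
  shows "meas f (path_ball n x 1) = f (x - 1) + f x + f (x + 1)"
proof -
  have ball: "path_ball n x 1 = {x - 1, x, x + 1} \<inter> {1..n}"
    unfolding path_ball_def path_dist_def by auto
  have "sum f ({x - 1, x, x + 1} \<inter> {1..n}) = sum f {x - 1, x, x + 1}"
  proof (rule sum.mono_neutral_left)
    show "\<forall>i\<in>{x - 1, x, x + 1} - {x - 1, x, x + 1} \<inter> {1..n}. f i = 0"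
    proof
      fix i assume "i \<in> {x - 1, x, x + 1} - {x - 1, x, x + 1} \<inter> {1..n}"
      then have "i = 0 \<or> i = n + 1"
        using assms(3) by auto
      then show "f i = 0"
        using assms(1,2) by auto
    qed
  qed auto
  also have "\<dots> = f (x - 1) + f x + f (x + 1)"
    using assms(3) by (cases x) auto
  finally show ?thesis
    unfolding meas_def ball .
qed

lemma sin_three_term:
  assumes "1 \<le> k"
  shows "sin (real (k - 1) * a) + sin (real k * a) + sin (real (k + 1) * a)
    = (1 + 2 * cos a) * sin (real k * a)"
proof -
  have "sin (t - a) + sin t + sin (t + a) = (1 + 2 * cos a) * sin t" for t
    by (simp add: sin_add sin_diff algebra_simps)
  from this[of "real k * a"] show ?thesis
    using assms by (simp add: of_nat_diff algebra_simps)
qed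

definition sine_measure :: "nat \<Rightarrow> nat \<Rightarrow> real" where
  "sine_measure n k = sin (real k * (pi / real (n + 1)))"

lemma sine_measure_pos:
  assumes "k \<in> {1..n}"
  shows "0 < sine_measure n k"
proof -
  have "real k < real (n + 1)"
    using assms by auto
  then have "real k * (pi / real (n + 1)) < real (n + 1) * (pi / real (n + 1))"
    by (intro mult_strict_right_mono) auto
  then have "real k * (pi / real (n + 1)) < pi"
    by simp
  moreover have "0 < real k * (pi / real (n + 1))"
    using assms by auto
  ultimately show ?thesis
    unfolding sine_measure_def by (intro sin_gt_zero) auto
qed

lemma is_path_measure_sine_measure: "is_path_measure n (sine_measure n)"
  unfolding is_path_measure_def using sine_measure_pos by blast

lemma meas_path_ball_sine_measure:
  assumes "x \<in> {1..n}"
  shows "meas (sine_measure n) (path_ball n x 1) = (1 + 2 * cos (pi / real (n + 1))) * sine_measure n x"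
proof -
  have "sine_measure n 0 = 0" "sine_measure n (n + 1) = 0"
    by (simp_all add: sine_measure_def)
  with assms show ?thesis
    using sin_three_term[of x "pi / real (n + 1)"]
    by (simp only: meas_path_ball_1 sine_measure_def) simp
qed

lemma C0_mu_eqI:
  assumes "n \<ge> 1" and "is_path_measure n \<mu>"
    and "\<And>x. x \<in> {1..n} \<Longrightarrow> meas \<mu> (path_ball n x 1) = c * \<mu> x"
  shows "C0_mu n \<mu> = c"
proof -
  have "(\<lambda>x. meas \<mu> (path_ball n x 1) / \<mu> x) ` {1..n} = (\<lambda>_. c) ` {1..n}"
  proof (rule image_cong)
    fix x assume x: "x \<in> {1..n}"
    with assms(2) have "0 < \<mu> x"
      by (simp add: is_path_measure_def)
    then show "meas \<mu> (path_ball n x 1) / \<mu> x = c"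
      using assms(3)[OF x] by simp
  qed simp
  also have "\<dots> = {c}"
    using assms(1) by auto
  finally show ?thesis
    by (simp add: C0_mu_def)
qed

lemma meas_path_ball_le_C0_mu:
  assumes "is_path_measure n \<mu>" "x \<in> {1..n}"
  shows "meas \<mu> (path_ball n x 1) \<le> C0_mu n \<mu> * \<mu> x"
proof -
  have "meas \<mu> (path_ball n x 1) / \<mu> x \<le> C0_mu n \<mu>"
    unfolding C0_mu_def using assms(2) by (intro Max_ge) auto
  moreover have "0 < \<mu> x"
    using assms by (simp add: is_path_measure_def)
  ultimately show ?thesis
    by (simp add: divide_le_eq)
qed

lemma le_C0_mu_if_meas_path_ball_ge:
  assumes "n \<ge> 1" "is_path_measure n \<mu>" "is_path_measure n v"
    and super: "\<And>x. x \<in> {1..n} \<Longrightarrow> c * v x \<le> meas v (path_ball n x 1)"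
  shows "c \<le> C0_mu n \<mu>"
proof -
  let ?C = "C0_mu n \<mu>"
  have pos: "0 < \<mu> x" "0 < v x" if "x \<in> {1..n}" for x
    using assms(2,3) that by (auto simp: is_path_measure_def)
  have "c * (\<Sum>y\<in>{1..n}. \<mu> y * v y) \<le> (\<Sum>y\<in>{1..n}. \<mu> y * meas v (path_ball n y 1))"
    unfolding sum_distrib_left
    by (intro sum_mono) (metis super pos(1) mult.left_commute mult_left_mono less_imp_le)
  also have "\<dots> = (\<Sum>x\<in>{1..n}. v x * meas \<mu> (path_ball n x 1))"
    by (rule sum_mult_meas_path_ball_commute[symmetric])
  also have "\<dots> \<le> (\<Sum>x\<in>{1..n}. v x * (?C * \<mu> x))"
    by (intro sum_mono mult_left_mono meas_path_ball_le_C0_mu assms(2))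
      (auto simp: pos less_imp_le)
  also have "\<dots> = ?C * (\<Sum>y\<in>{1..n}. \<mu> y * v y)"
    by (simp add: sum_distrib_left algebra_simps)
  finally have "c * (\<Sum>y\<in>{1..n}. \<mu> y * v y) \<le> ?C * (\<Sum>y\<in>{1..n}. \<mu> y * v y)" .
  moreover have "0 < (\<Sum>y\<in>{1..n}. \<mu> y * v y)"
    using assms(1) by (intro sum_pos) (auto simp: pos)
  ultimately show ?thesis
    by simp
qed

theorem theorem3p7:
  fixes n :: nat
  assumes "n \<ge> 2"
  shows "C0_L n = 1 + 2 * cos (pi / real (n + 1))"
  unfolding C0_L_def
proof (rule cInf_eq_minimum)
  have "C0_mu n (sine_measure n) = 1 + 2 * cos (pi / real (n + 1))"
    using assms by (intro C0_mu_eqI is_path_measure_sine_measure meas_path_ball_sine_measure) auto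
  then show "1 + 2 * cos (pi / real (n + 1)) \<in> C0_mu n ` {\<mu>. is_path_measure n \<mu>}"
    using is_path_measure_sine_measure by force
next
  fix C assume "C \<in> C0_mu n ` {\<mu>. is_path_measure n \<mu>}"
  then obtain \<mu> where "is_path_measure n \<mu>" "C = C0_mu n \<mu>"
    by blast
  with assms show "1 + 2 * cos (pi / real (n + 1)) \<le> C"
    using le_C0_mu_if_meas_path_ball_ge[OF _ _ is_path_measure_sine_measure] meas_path_ball_sine_measure
    by simp
qed

end
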